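(* Let $n\ge 2$ and let $P=[p_{ij}]\in\mathbb{R}^{n\times n}$ be an irreducible row-stochastic matrix, viewed as the transition matrix of a Markov chain (random walk) on the node set $N=\{1,\dots,n\}$. For $i\neq j$ let $\varepsilon_{ij}$ be the probability that the chain started at node $i$ visits node $j$ before returning to node $i$ (i.e. before its first return to $i$ at a time $\ge 1$), and set $\varepsilon_{ii}=\sum_{k\neq i}(1-\varepsilon_{ik})$. Then for all $i\neq j$, $$\varepsilon_{ij}=\mathcal{I}_{\{i,j\}}(P)_{ij},$$ and for all $i\in N$, $$\varepsilon_{ii}=\sum_{k\in N,\,k\neq i}\mathcal{I}_{\{i,k\}}(P)_{ii}.$$ In other words, the matrix $[\varepsilon_{ij}]$ coincides with the effective transition matrix $\mathcal{E}(P)$.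
   Context: For a matrix $M\in\mathbb{R}^{n\times n}$ and $R,C\subseteq N=\{1,\dots,n\}$, $M_{RC}$ denotes the submatrix with rows indexed by $R$ and columns indexed by $C$, and $\bar S=N\setminus S$. The isoradial reduction of $M$ over a nonempty $S\subseteq N$ is $$\mathcal{I}_S(M)=M_{SS}-M_{S\bar S}\big(M_{\bar S\bar S}-\rho(M)I\big)^{-1}M_{\bar S S}\in\mathbb{R}^{|S|\times|S|},$$ where $\rho(M)$ is the spectral radius of $M$ (the correction term is omitted if $\bar S=\emptyset$); its rows and columns are indexed by the elements of $S$, so for $S=\{i,k\}$ the entries are $\mathcal{I}_{\{i,k\}}(M)_{ii},\mathcal{I}_{\{i,k\}}(M)_{ik},\mathcal{I}_{\{i,k\}}(M)_{ki},\mathcal{I}_{\{i,k\}}(M)_{kk}$. (For $M$ nonnegative irreducible these reductions exist.) The effective transition matrix of a nonnegative irreducible $M$ is $\mathcal{E}(M)=[\varepsilon_{ij}]$ with $\varepsilon_{ij}=\mathcal{I}_{\{i,j\}}(M)_{ij}$ for $i\neq j$ and $\varepsilon_{ii}=\sum_{k\neq i}\mathcal{I}_{\{i,k\}}(M)_{ii}$. *)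

theory Defs
  imports "Jordan_Normal_Form.Spectral_Radius" "Jordan_Normal_Form.DL_Submatrix"
    "Jordan_Normal_Form.Gauss_Jordan_Elimination"
begin

text \<open>Nodes are indexed 0..n-1 (instead of 1..n).\<close>

definition row_stochastic :: "real mat \<Rightarrow> bool" where
  "row_stochastic P \<longleftrightarrow> dim_row P = dim_col P
     \<and> (\<forall>i<dim_row P. \<forall>j<dim_col P. P $$ (i,j) \<ge> 0)
     \<and> (\<forall>i<dim_row P. (\<Sum>j<dim_col P. P $$ (i,j)) = 1)"

definition irreducible_mat :: "real mat \<Rightarrow> bool" where
  "irreducible_mat P \<longleftrightarrow> dim_row P = dim_col P
     \<and> (\<forall>i<dim_row P. \<forall>j<dim_row P. \<exists>k. (P ^\<^sub>m k) $$ (i,j) > 0)"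

definition spec_rad :: "real mat \<Rightarrow> real" where
  "spec_rad M = spectral_radius (map_mat complex_of_real M)"

text \<open>Isoradial reduction over S; rows/columns of the result are the elements of S
  in increasing order (as in submatrix).\<close>
definition isoradial_reduction :: "nat set \<Rightarrow> real mat \<Rightarrow> real mat" where
  "isoradial_reduction S M =
     (let Sb = {0..<dim_row M} - S in
      if Sb = {} then submatrix M S S
      else submatrix M S S - submatrix M S Sb
             * the (mat_inverse (submatrix M Sb Sb - spec_rad M \<cdot>\<^sub>m 1\<^sub>m (card Sb)))
             * submatrix M Sb S)"

definition iso_entry :: "nat set \<Rightarrow> real mat \<Rightarrow> nat \<Rightarrow> nat \<Rightarrow> real" where
  "iso_entry S M a b = isoradial_reduction S M $$ (card {x\<in>S. x < a}, card {x\<in>S. x < b})"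

text \<open>Path of length Suc m from i to j with intermediate states x 1, ..., x m.\<close>
definition walk :: "nat \<Rightarrow> nat \<Rightarrow> nat \<Rightarrow> (nat \<Rightarrow> nat) \<Rightarrow> nat \<Rightarrow> nat" where
  "walk i j m x t = (if t = 0 then i else if t = Suc m then j else x t)"

text \<open>Probability that the chain with transition matrix P started at i visits j
  before returning to i: sum over the lengths Suc m of the first hitting time of {i,j}
  (at j) of the probabilities of all paths i, x 1, ..., x m, j with x t not in {i,j}.\<close>
definition visit_before_return :: "real mat \<Rightarrow> nat \<Rightarrow> nat \<Rightarrow> real" where
  "visit_before_return P i j =
     (\<Sum>m. \<Sum>x\<in>{1..m} \<rightarrow>\<^sub>E ({0..<dim_row P} - {i,j}).
        \<Prod>t\<le>m. P $$ (walk i j m x t, walk i j m x (Suc t)))"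

end

(* Fix i ~= j, let B = N - {i,j} and let h b be the probability that the walk started at b
   enters {i,j} (at a time >= 1) first at j.  First-step analysis gives h = P_Bj + P_BB h on B
   and eps_ij = p_ij + P_iB h.  A stochastic matrix has spectral radius 1, and irreducibility
   makes P_BB - I invertible: by the maximum principle every solution of f = P_BB f vanishes.
   Hence h = -(P_BB - I)^-1 P_Bj, which turns the Schur complement defining the isoradial
   entry I_{i,j}(P)_ij into p_ij + P_iB h = eps_ij.  The same argument applied to 1 - h, the
   probability of entering {i,j} first at i, gives I_{i,j}(P)_ii = 1 - eps_ij. *)

theory Submission
  imports Defs
begin

lemma mult_mat_vec_index_sum:
  assumes "A \<in> carrier_mat n n" "v \<in> carrier_vec n" "a < n"
  shows "(A *\<^sub>v v) $ a = (\<Sum>b<n. A $$ (a,b) * v $ b)"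
  using assms by (auto simp: scalar_prod_def atLeast0LessThan intro!: sum.cong)

lemma card_less_elem_less_card:
  "finite (A :: nat set) \<Longrightarrow> a \<in> A \<Longrightarrow> card {x\<in>A. x < a} < card A"
  by (rule psubset_card_mono) auto

lemma sum_pick:
  assumes "finite A"
  shows "(\<Sum>s<card A. g (pick A s)) = (\<Sum>b\<in>A. g b)"
  by (rule sum.reindex_bij_witness[where i = "\<lambda>b. card {a\<in>A. a < b}" and j = "pick A"])
    (auto simp: pick_in_set card_pick pick_card_in_set card_less_elem_less_card assms)

lemma submatrix_carrier_mat:
  assumes "M \<in> carrier_mat n m" "I \<subseteq> {..<n}" "J \<subseteq> {..<m}"
  shows "submatrix M I J \<in> carrier_mat (card I) (card J)"
proof -
  have rows: "{x. x < dim_row M \<and> x \<in> I} = I" and cols: "{x. x < dim_col M \<and> x \<in> J} = J"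
    using assms by auto
  show ?thesis by (intro carrier_matI) (simp_all only: dim_submatrix rows cols)
qed

lemma submatrix_index_pick:
  assumes "M \<in> carrier_mat n m" "I \<subseteq> {..<n}" "J \<subseteq> {..<m}" "r < card I" "s < card J"
  shows "submatrix M I J $$ (r,s) = M $$ (pick I r, pick J s)"
proof -
  have "{x. x < dim_row M \<and> x \<in> I} = I" "{x. x < dim_col M \<and> x \<in> J} = J"
    using assms by auto
  then show ?thesis using assms(4,5) by (intro submatrix_index) simp_all
qed

lemma block_shift_mult_vec_pick:
  fixes M :: "real mat"
  assumes M: "M \<in> carrier_mat n n" and B: "B \<subseteq> {..<n}" and r: "r < card B"
  shows "((submatrix M B B - \<rho> \<cdot>\<^sub>m 1\<^sub>m (card B)) *\<^sub>v vec (card B) (\<lambda>s. f (pick B s))) $ r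
    = (\<Sum>c\<in>B. M $$ (pick B r, c) * f c) - \<rho> * f (pick B r)"
proof -
  let ?K = "submatrix M B B - \<rho> \<cdot>\<^sub>m 1\<^sub>m (card B)"
  have fin: "finite B" using B finite_subset by blast
  have K: "?K \<in> carrier_mat (card B) (card B)" by (intro minus_carrier_mat smult_carrier_mat one_carrier_mat)
  have "(?K *\<^sub>v vec (card B) (\<lambda>s. f (pick B s))) $ r = (\<Sum>s<card B. ?K $$ (r,s) * f (pick B s))"
    using mult_mat_vec_index_sum[OF K _ r] by simp
  also have "\<dots> = (\<Sum>s<card B. M $$ (pick B r, pick B s) * f (pick B s)
                                 - (if s = r then \<rho> * f (pick B r) else 0))"
    using r submatrix_index_pick[OF M B B r]
    by (intro sum.cong) (auto simp: algebra_simps)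
  also have "\<dots> = (\<Sum>c\<in>B. M $$ (pick B r, c) * f c) - \<rho> * f (pick B r)"
    using r sum_pick[OF fin, of "\<lambda>c. M $$ (pick B r, c) * f c"] by (simp add: sum_subtractf)
  finally show ?thesis .
qed

lemma block_shift_invertible:
  fixes M :: "real mat"
  assumes M: "M \<in> carrier_mat n n" and B: "B \<subseteq> {..<n}"
    and harmonic_zero: "\<And>f b. (\<And>b. b \<in> B \<Longrightarrow> \<rho> * f b = (\<Sum>c\<in>B. M $$ (b,c) * f c)) \<Longrightarrow> b \<in> B
      \<Longrightarrow> f b = 0"
  shows "mat_inverse (submatrix M B B - \<rho> \<cdot>\<^sub>m 1\<^sub>m (card B)) \<noteq> None"
proof -
  let ?K = "submatrix M B B - \<rho> \<cdot>\<^sub>m 1\<^sub>m (card B)"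
  have fin: "finite B" using B finite_subset by blast
  have K: "?K \<in> carrier_mat (card B) (card B)" by (intro minus_carrier_mat smult_carrier_mat one_carrier_mat)
  have "det ?K \<noteq> 0"
  proof
    assume "det ?K = 0"
    then obtain v where v: "v \<in> carrier_vec (card B)" "v \<noteq> 0\<^sub>v (card B)" "?K *\<^sub>v v = 0\<^sub>v (card B)"
      using det_0_iff_vec_prod_zero_field[OF K] by auto
    define f where "f b = v $ card {x\<in>B. x < b}" for b
    have v_f: "v = vec (card B) (\<lambda>s. f (pick B s))"
      using v(1) by (intro eq_vecI) (auto simp: f_def card_pick)
    have harmonic: "\<rho> * f b = (\<Sum>c\<in>B. M $$ (b,c) * f c)" if b: "b \<in> B" for b
    proof -
      define r where "r = card {x\<in>B. x < b}"
      have r: "r < card B" unfolding r_def using card_less_elem_less_card[OF fin b] .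
      have "0 = (?K *\<^sub>v v) $ r" using v(3) r by simp
      also have "\<dots> = (\<Sum>c\<in>B. M $$ (b,c) * f c) - \<rho> * f b"
        using block_shift_mult_vec_pick[OF M B r, of \<rho> f] pick_card_in_set[OF b]
        by (simp add: v_f r_def)
      finally show ?thesis by simp
    qed
    have "v $ s = 0" if "s < card B" for s
      using harmonic_zero[OF harmonic pick_in_set] v_f that by simp
    then have "v = 0\<^sub>v (card B)" using v(1) by (intro eq_vecI) auto
    with v(2) show False ..
  qed
  then have "?K \<in> Units (ring_mat TYPE(real) (card B) ())" by (rule det_non_zero_imp_unit[OF K])
  then show ?thesis using mat_inverse(1)[OF K, where b = "()"] by blast
qed

text \<open>Schur complement: F = -(M_TT - \<rho> I)^-1 M_Tz on T = N - S, so the correction term of the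
  reduction is -M_aT F.\<close>
lemma iso_entry_first_step:
  fixes M :: "real mat"
  assumes M: "M \<in> carrier_mat n n" and S: "S \<subseteq> {..<n}" and a: "a \<in> S" and z: "z \<in> S"
    and inv: "mat_inverse (submatrix M ({0..<n} - S) ({0..<n} - S)
                - spec_rad M \<cdot>\<^sub>m 1\<^sub>m (card ({0..<n} - S))) \<noteq> None"
    and F: "\<And>b. b \<in> {0..<n} - S
              \<Longrightarrow> spec_rad M * F b = M $$ (b,z) + (\<Sum>c\<in>{0..<n} - S. M $$ (b,c) * F c)"
  shows "iso_entry S M a z = M $$ (a,z) + (\<Sum>b\<in>{0..<n} - S. M $$ (a,b) * F b)"
proof -
  define T where "T = {0..<n} - S"
  define K where "K = submatrix M T T - spec_rad M \<cdot>\<^sub>m 1\<^sub>m (card T)"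
  define ra where "ra = card {x\<in>S. x < a}"
  define rz where "rz = card {x\<in>S. x < z}"
  have T: "T \<subseteq> {..<n}" and finT: "finite T" unfolding T_def by auto
  have finS: "finite S" using S finite_subset by blast
  have ra: "ra < card S" and rz: "rz < card S"
    unfolding ra_def rz_def using card_less_elem_less_card[OF finS] a z by auto
  have pick_ra: "pick S ra = a" and pick_rz: "pick S rz = z"
    unfolding ra_def rz_def using pick_card_in_set a z by auto
  have Z: "submatrix M S S $$ (ra, rz) = M $$ (a,z)"
    using submatrix_index_pick[OF M S S ra rz] pick_ra pick_rz by simp
  have dim: "dim_row M = n" using M by simp
  show ?thesis
  proof (cases "T = {}")
    case True
    have "iso_entry S M a z = submatrix M S S $$ (ra, rz)"
      by (simp add: iso_entry_def isoradial_reduction_def dim ra_def rz_def T_def[symmetric] True)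
    then show ?thesis using Z by (simp add: T_def[symmetric] True)
  next
    case False
    have K: "K \<in> carrier_mat (card T) (card T)"
      unfolding K_def by (intro minus_carrier_mat smult_carrier_mat one_carrier_mat)
    obtain W where W: "mat_inverse K = Some W" using inv by (auto simp: K_def T_def)
    have WK: "W * K = 1\<^sub>m (card T)" and Wc: "W \<in> carrier_mat (card T) (card T)"
      using mat_inverse(2)[OF K W] by auto
    define X where "X = submatrix M S T"
    define Y where "Y = submatrix M T S"
    have X: "X \<in> carrier_mat (card S) (card T)" and Y: "Y \<in> carrier_mat (card T) (card S)"
      using submatrix_carrier_mat[OF M S T] submatrix_carrier_mat[OF M T S] by (simp_all add: X_def Y_def)
    define y where "y = vec (card T) (\<lambda>s. - F (pick T s))"
    have y: "y \<in> carrier_vec (card T)" unfolding y_def by simp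
    have "K *\<^sub>v y = col Y rz"
    proof (rule eq_vecI)
      fix r assume "r < dim_vec (col Y rz)"
      then have r: "r < card T" using Y by simp
      have "(K *\<^sub>v y) $ r = (\<Sum>c\<in>T. M $$ (pick T r, c) * - F c) - spec_rad M * - F (pick T r)"
        unfolding K_def y_def by (rule block_shift_mult_vec_pick[OF M T r])
      also have "\<dots> = M $$ (pick T r, z)"
        using F[of "pick T r"] pick_in_set[of r T] r by (simp add: T_def sum_negf)
      also have "\<dots> = col Y rz $ r"
        using Y r rz submatrix_index_pick[OF M T S r rz] pick_rz by (simp add: Y_def)
      finally show "(K *\<^sub>v y) $ r = col Y rz $ r" .
    qed (use K Y in simp)
    then have W_col: "W *\<^sub>v col Y rz = y"
      using WK Wc K y by (metis assoc_mult_mat_vec one_mult_mat_vec)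
    have "(X * W * Y) $$ (ra, rz) = row X ra \<bullet> col (W * Y) rz"
      using X Wc Y ra rz by (simp add: assoc_mult_mat[OF X Wc Y])
    also have "col (W * Y) rz = W *\<^sub>v col Y rz" using col_mult2[OF Wc Y rz] .
    also have "\<dots> = y" by (rule W_col)
    also have "row X ra \<bullet> y = (\<Sum>s<card T. X $$ (ra, s) * y $ s)"
      using X ra y by (simp add: scalar_prod_def atLeast0LessThan)
    also have "\<dots> = (\<Sum>s<card T. - (M $$ (a, pick T s) * F (pick T s)))"
      using submatrix_index_pick[OF M S T ra] pick_ra by (simp add: X_def y_def)
    also have "\<dots> = - (\<Sum>b\<in>T. M $$ (a,b) * F b)"
      using sum_pick[OF finT, of "\<lambda>b. M $$ (a,b) * F b"] by (simp add: sum_negf)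
    finally have XWY: "(X * W * Y) $$ (ra, rz) = - (\<Sum>b\<in>T. M $$ (a,b) * F b)" .
    have "iso_entry S M a z = (submatrix M S S - X * W * Y) $$ (ra, rz)"
      using False W by (simp add: iso_entry_def isoradial_reduction_def dim ra_def rz_def
          X_def Y_def T_def[symmetric] K_def[symmetric])
    also have "\<dots> = M $$ (a,z) + (\<Sum>b\<in>T. M $$ (a,b) * F b)"
      using X Wc Y ra rz XWY Z by simp
    finally show ?thesis unfolding T_def .
  qed
qed

lemma row_stochastic_eigenvalue_norm_le_1:
  assumes P: "row_stochastic P" and ev: "eigenvalue (map_mat complex_of_real P) l"
  shows "cmod l \<le> 1"
proof -
  define n where "n = dim_row P"
  let ?A = "map_mat complex_of_real P"
  have A: "?A \<in> carrier_mat n n" using P unfolding row_stochastic_def n_def by auto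
  have nonneg: "\<And>a c. a < n \<Longrightarrow> c < n \<Longrightarrow> 0 \<le> P $$ (a,c)"
    and rows: "\<And>a. a < n \<Longrightarrow> (\<Sum>c<n. P $$ (a,c)) = 1"
    using P unfolding row_stochastic_def n_def by (auto simp: atLeast0LessThan)
  obtain v where v: "v \<in> carrier_vec n" "v \<noteq> 0\<^sub>v n" "?A *\<^sub>v v = l \<cdot>\<^sub>v v"
    using ev A unfolding eigenvalue_def eigenvector_def by auto
  obtain b where b: "b < n" "v $ b \<noteq> 0"
  proof (rule ccontr)
    assume "\<not> thesis"
    then have "v = 0\<^sub>v n" using that v(1) by (intro eq_vecI) auto
    with v(2) show False ..
  qed
  define m where "m = Max ((\<lambda>c. cmod (v $ c)) ` {..<n})"
  have le: "cmod (v $ c) \<le> m" if "c < n" for c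
    unfolding m_def using that by (intro Max_ge) auto
  obtain a where a: "a < n" "cmod (v $ a) = m"
    using Max_in[of "(\<lambda>c. cmod (v $ c)) ` {..<n}"] b(1) unfolding m_def by fastforce
  have m: "0 < m" using le[OF b(1)] b(2) by (meson less_le_trans zero_less_norm_iff)
  have "cmod l * m = cmod ((?A *\<^sub>v v) $ a)" using v(1,3) a by (simp add: norm_mult)
  also have "\<dots> = cmod (\<Sum>c<n. complex_of_real (P $$ (a,c)) * v $ c)"
    using mult_mat_vec_index_sum[OF A v(1) a(1)] a A by (auto intro!: arg_cong[where f = cmod] sum.cong)
  also have "\<dots> \<le> (\<Sum>c<n. cmod (complex_of_real (P $$ (a,c)) * v $ c))"
    by (rule norm_sum)
  also have "\<dots> = (\<Sum>c<n. P $$ (a,c) * cmod (v $ c))"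
    using nonneg a by (intro sum.cong) (auto simp: norm_mult)
  also have "\<dots> \<le> (\<Sum>c<n. P $$ (a,c) * m)"
    using nonneg a le by (intro sum_mono mult_left_mono) auto
  also have "\<dots> = m" using rows a by (simp add: sum_distrib_right[symmetric])
  finally show ?thesis using m by simp
qed

lemma spec_rad_row_stochastic:
  assumes P: "row_stochastic P" and n: "0 < dim_row P"
  shows "spec_rad P = 1"
proof -
  define n where "n = dim_row P"
  let ?A = "map_mat complex_of_real P"
  define ones where "ones = vec n (\<lambda>_. 1 :: complex)"
  have A: "?A \<in> carrier_mat n n" using P unfolding row_stochastic_def n_def by auto
  have "?A *\<^sub>v ones = 1 \<cdot>\<^sub>v ones"
  proof (rule eq_vecI)
    fix a assume "a < dim_vec (1 \<cdot>\<^sub>v ones)"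
    then have a: "a < n" by (simp add: ones_def)
    have "(?A *\<^sub>v ones) $ a = complex_of_real (\<Sum>c<n. P $$ (a,c))"
      using mult_mat_vec_index_sum[OF A _ a, of ones] a A by (simp add: ones_def)
    also have "\<dots> = 1"
      using P a unfolding row_stochastic_def n_def by (simp add: atLeast0LessThan)
    finally show "(?A *\<^sub>v ones) $ a = (1 \<cdot>\<^sub>v ones) $ a" using a by (simp add: ones_def)
  qed (use A in \<open>simp add: ones_def\<close>)
  moreover have "ones \<noteq> 0\<^sub>v n"
  proof
    assume "ones = 0\<^sub>v n"
    then have "ones $ 0 = 0" using n by (simp add: n_def)
    then show False using n by (simp add: ones_def n_def)
  qed
  ultimately have "eigenvector ?A ones 1"
    using A unfolding eigenvector_def by (simp add: ones_def)
  then have "1 \<in> spectrum ?A" unfolding spectrum_def eigenvalue_def by blast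
  then have "1 \<le> spectral_radius ?A"
    using spectral_radius_mem_max(2)[OF A] n by (force simp: n_def)
  moreover obtain l where "l \<in> spectrum ?A" "spectral_radius ?A = cmod l"
    using spectral_radius_mem_max(1)[OF A] n by (auto simp: n_def)
  ultimately show ?thesis
    using row_stochastic_eigenvalue_norm_le_1[OF P] unfolding spec_rad_def spectrum_def by force
qed

text \<open>The index m counts the intermediate states, all in B: the walk from a to z has Suc m steps.\<close>
fun taboo_prob :: "real mat \<Rightarrow> nat set \<Rightarrow> nat \<Rightarrow> nat \<Rightarrow> nat \<Rightarrow> real" where
  "taboo_prob P B 0 a z = P $$ (a,z)"
| "taboo_prob P B (Suc m) a z = (\<Sum>b\<in>B. taboo_prob P B m a b * P $$ (b,z))"

lemma taboo_prob_Suc_left: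
  "taboo_prob P B (Suc m) a z = (\<Sum>b\<in>B. P $$ (a,b) * taboo_prob P B m b z)"
proof (induction m arbitrary: z)
  case 0
  show ?case by simp
next
  case (Suc m)
  have "taboo_prob P B (Suc (Suc m)) a z
      = (\<Sum>c\<in>B. (\<Sum>b\<in>B. P $$ (a,b) * taboo_prob P B m b c) * P $$ (c,z))"
    using Suc by simp
  also have "\<dots> = (\<Sum>b\<in>B. P $$ (a,b) * (\<Sum>c\<in>B. taboo_prob P B m b c * P $$ (c,z)))"
    by (simp add: sum_distrib_right sum_distrib_left mult.assoc) (rule sum.swap)
  finally show ?case by simp
qed

lemma prod_walk_extend:
  "(\<Prod>t\<le>Suc m. P $$ (walk a z (Suc m) (x(Suc m := y)) t, walk a z (Suc m) (x(Suc m := y)) (Suc t)))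
   = (\<Prod>t\<le>m. P $$ (walk a y m x t, walk a y m x (Suc t))) * P $$ (y,z)"
proof -
  have "(\<Prod>t\<le>m. P $$ (walk a z (Suc m) (x(Suc m := y)) t, walk a z (Suc m) (x(Suc m := y)) (Suc t)))
      = (\<Prod>t\<le>m. P $$ (walk a y m x t, walk a y m x (Suc t)))"
    by (intro prod.cong refl) (auto simp: walk_def)
  then show ?thesis by (simp add: prod.atMost_Suc walk_def)
qed

lemma sum_walks_eq_taboo_prob:
  assumes "finite B"
  shows "(\<Sum>x\<in>{1..m} \<rightarrow>\<^sub>E B. \<Prod>t\<le>m. P $$ (walk a z m x t, walk a z m x (Suc t)))
    = taboo_prob P B m a z"
proof (induction m arbitrary: z)
  case 0
  show ?case by (simp add: walk_def)
next
  case (Suc m)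
  let ?w = "\<lambda>z m x. \<Prod>t\<le>m. P $$ (walk a z m x t, walk a z m x (Suc t))"
  have dom: "{1..Suc m} = insert (Suc m) {1..m}" by auto
  have "(\<Sum>x\<in>{1..Suc m} \<rightarrow>\<^sub>E B. ?w z (Suc m) x)
      = (\<Sum>p\<in>B \<times> ({1..m} \<rightarrow>\<^sub>E B). ?w z (Suc m) ((\<lambda>(y, x). x(Suc m := y)) p))"
    unfolding dom PiE_insert_eq by (subst sum.reindex[OF inj_combinator]) (auto simp: o_def)
  also have "\<dots> = (\<Sum>p\<in>B \<times> ({1..m} \<rightarrow>\<^sub>E B). ?w (fst p) m (snd p) * P $$ (fst p, z))"
    by (intro sum.cong refl) (clarify, simp only: prod.case fst_conv snd_conv prod_walk_extend)
  also have "\<dots> = (\<Sum>y\<in>B. \<Sum>x\<in>{1..m} \<rightarrow>\<^sub>E B. ?w y m x * P $$ (y,z))"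
    unfolding sum.cartesian_product by (rule sum.cong) auto
  also have "\<dots> = (\<Sum>y\<in>B. taboo_prob P B m a y * P $$ (y,z))"
    by (simp only: sum_distrib_right[symmetric] Suc.IH)
  finally show ?case by simp
qed

text \<open>Probability that the first visit outside B at a time \<ge> 1 is a visit to z.\<close>
definition exit_prob :: "real mat \<Rightarrow> nat set \<Rightarrow> nat \<Rightarrow> nat \<Rightarrow> real" where
  "exit_prob P B a z = (\<Sum>m. taboo_prob P B m a z)"

lemma visit_before_return_eq_exit_prob:
  "visit_before_return P i j = exit_prob P ({0..<dim_row P} - {i,j}) i j"
  unfolding visit_before_return_def exit_prob_def
    sum_walks_eq_taboo_prob[OF finite_Diff[OF finite_atLeastLessThan]] ..

locale stochastic_matrix =
  fixes P :: "real mat" and n :: nat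
  assumes carrier: "P \<in> carrier_mat n n" and stochastic: "row_stochastic P"
begin

lemma nonneg: "a < n \<Longrightarrow> b < n \<Longrightarrow> 0 \<le> P $$ (a,b)"
  using carrier stochastic unfolding row_stochastic_def by auto

lemma row_sum: "a < n \<Longrightarrow> (\<Sum>b<n. P $$ (a,b)) = 1"
  using carrier stochastic unfolding row_stochastic_def by auto

lemma row_sum_subset:
  assumes "B \<subseteq> {..<n}" "a < n"
  shows "(\<Sum>b\<in>B. P $$ (a,b)) = 1 - (\<Sum>b\<in>{..<n} - B. P $$ (a,b))"
  using sum.subset_diff[OF assms(1), of "\<lambda>b. P $$ (a,b)"] row_sum[OF assms(2)] by simp

lemma taboo_prob_nonneg: "B \<subseteq> {..<n} \<Longrightarrow> a < n \<Longrightarrow> z < n \<Longrightarrow> 0 \<le> taboo_prob P B m a z"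
  by (induction m arbitrary: z) (auto intro!: sum_nonneg mult_nonneg_nonneg nonneg)

lemma taboo_prob_partial_sums_le_1:
  assumes B: "B \<subseteq> {..<n}" and a: "a < n"
  shows "(\<Sum>m<M. \<Sum>z\<in>{..<n} - B. taboo_prob P B m a z) \<le> 1"
  using a
proof (induction M arbitrary: a)
  case 0
  show ?case by simp
next
  case (Suc M)
  let ?E = "\<lambda>m a. \<Sum>z\<in>{..<n} - B. taboo_prob P B m a z"
  have E_Suc: "?E (Suc m) a = (\<Sum>b\<in>B. P $$ (a,b) * ?E m b)" for m
    by (simp only: taboo_prob_Suc_left sum_distrib_left) (rule sum.swap)
  have "(\<Sum>m<M. ?E (Suc m) a) = (\<Sum>b\<in>B. P $$ (a,b) * (\<Sum>m<M. ?E m b))"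
    by (simp only: E_Suc sum_distrib_left) (rule sum.swap)
  also have "\<dots> \<le> (\<Sum>b\<in>B. P $$ (a,b))"
    using Suc B nonneg by (intro sum_mono mult_left_le) auto
  finally have tail: "(\<Sum>m<M. ?E (Suc m) a) \<le> (\<Sum>b\<in>B. P $$ (a,b))" .
  have "(\<Sum>m<Suc M. ?E m a) = ?E 0 a + (\<Sum>m<M. ?E (Suc m) a)"
    by (rule sum.lessThan_Suc_shift)
  also have "\<dots> \<le> ?E 0 a + (\<Sum>b\<in>B. P $$ (a,b))"
    using tail by simp
  also have "\<dots> = 1"
    using row_sum_subset[OF B Suc.prems] by simp
  finally show ?case .
qed

lemma summable_taboo_prob:
  assumes B: "B \<subseteq> {..<n}" and a: "a < n" and z: "z < n" "z \<notin> B"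
  shows "summable (\<lambda>m. taboo_prob P B m a z)"
proof (rule summableI_nonneg_bounded)
  show "0 \<le> taboo_prob P B m a z" for m
    using taboo_prob_nonneg B a z by simp
  show "(\<Sum>m<M. taboo_prob P B m a z) \<le> 1" for M
  proof -
    have "(\<Sum>m<M. taboo_prob P B m a z) \<le> (\<Sum>m<M. \<Sum>y\<in>{..<n} - B. taboo_prob P B m a y)"
      using z taboo_prob_nonneg[OF B a] by (intro sum_mono member_le_sum) auto
    then show ?thesis using taboo_prob_partial_sums_le_1[OF B a, of M] by linarith
  qed
qed

lemma exit_prob_first_step:
  assumes B: "B \<subseteq> {..<n}" and a: "a < n" and z: "z < n" "z \<notin> B"
  shows "exit_prob P B a z = P $$ (a,z) + (\<Sum>b\<in>B. P $$ (a,b) * exit_prob P B b z)"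
proof -
  have summable: "summable (\<lambda>m. taboo_prob P B m b z)" if "b < n" for b
    using summable_taboo_prob[OF B that z] .
  have "exit_prob P B a z = P $$ (a,z) + (\<Sum>m. taboo_prob P B (Suc m) a z)"
    using suminf_split_head[OF summable[OF a]] by (simp add: exit_prob_def)
  also have "(\<Sum>m. taboo_prob P B (Suc m) a z) = (\<Sum>m. \<Sum>b\<in>B. P $$ (a,b) * taboo_prob P B m b z)"
    by (simp only: taboo_prob_Suc_left)
  also have "\<dots> = (\<Sum>b\<in>B. \<Sum>m. P $$ (a,b) * taboo_prob P B m b z)"
    using B by (intro suminf_sum summable_mult summable) auto
  also have "\<dots> = (\<Sum>b\<in>B. P $$ (a,b) * exit_prob P B b z)"
    using B unfolding exit_prob_def by (intro sum.cong refl suminf_mult summable) auto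
  finally show ?thesis .
qed

lemma reachable_mem_closed:
  assumes C: "C \<subseteq> {..<n}"
    and closed: "\<And>c d. c \<in> C \<Longrightarrow> d < n \<Longrightarrow> 0 < P $$ (c,d) \<Longrightarrow> d \<in> C"
    and a: "a \<in> C"
  shows "b < n \<Longrightarrow> 0 < (P ^\<^sub>m k) $$ (a,b) \<Longrightarrow> b \<in> C"
proof (induction k arbitrary: b)
  case 0
  then show ?case using a C carrier by (auto split: if_splits)
next
  case (Suc k)
  have Pk: "P ^\<^sub>m k \<in> carrier_mat n n" using carrier by simp
  have an: "a < n" using a C by auto
  have "(P ^\<^sub>m Suc k) $$ (a,b) = (\<Sum>c<n. (P ^\<^sub>m k) $$ (a,c) * P $$ (c,b))"
    using Pk carrier an Suc.prems by (auto simp: scalar_prod_def atLeast0LessThan intro!: sum.cong)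
  then obtain c where c: "c < n" "0 < (P ^\<^sub>m k) $$ (a,c) * P $$ (c,b)"
    using Suc.prems sum_nonpos[of "{..<n}" "\<lambda>c. (P ^\<^sub>m k) $$ (a,c) * P $$ (c,b)"]
    by (force simp: not_less)
  then have "0 < P $$ (c,b)" "0 < (P ^\<^sub>m k) $$ (a,c)"
    using nonneg[OF c(1) Suc.prems(1)] by (auto simp: zero_less_mult_iff)
  then show ?case using Suc.IH[OF c(1)] closed Suc.prems(1) by blast
qed

end

locale irreducible_stochastic_matrix = stochastic_matrix +
  assumes irreducible: "irreducible_mat P"
begin

text \<open>Maximum principle: the set where f attains a positive maximum is closed under transitions,
  yet irreducibility leads from it to i, outside B.\<close>
lemma harmonic_le_0:
  assumes B: "B \<subseteq> {..<n}" and i: "i < n" "i \<notin> B"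
    and harmonic: "\<And>b. b \<in> B \<Longrightarrow> f b = (\<Sum>c\<in>B. P $$ (b,c) * f c)"
    and b: "b \<in> B"
  shows "f b \<le> 0"
proof (rule ccontr)
  assume fb: "\<not> f b \<le> 0"
  have fin: "finite B" using B finite_subset by blast
  define m where "m = Max (f ` B)"
  define C where "C = {c\<in>B. f c = m}"
  have le: "f c \<le> m" if "c \<in> B" for c
    unfolding m_def using fin that by simp
  have m: "0 < m" using le[OF b] fb by linarith
  obtain a where a: "a \<in> C"
    using Max_in[of "f ` B"] fin b unfolding C_def m_def by fastforce
  have closed: "d \<in> C" if c: "c \<in> C" and d: "d < n" and pos: "0 < P $$ (c,d)" for c d
  proof -
    have cB: "c \<in> B" "c < n" "f c = m" using c B unfolding C_def by auto
    let ?D = "{..<n} - B"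
    have "(\<Sum>e\<in>B. P $$ (c,e) * (m - f e)) + (\<Sum>e\<in>?D. P $$ (c,e)) * m
        = ((\<Sum>e\<in>B. P $$ (c,e)) + (\<Sum>e\<in>?D. P $$ (c,e)) - 1) * m"
      using harmonic[OF cB(1)] cB(3)
      by (simp add: right_diff_distrib sum_subtractf sum_distrib_right algebra_simps)
    also have "\<dots> = 0" using row_sum_subset[OF B cB(2)] by simp
    finally have sum_0: "(\<Sum>e\<in>B. P $$ (c,e) * (m - f e)) + (\<Sum>e\<in>?D. P $$ (c,e)) * m = 0" .
    have B_terms: "0 \<le> P $$ (c,e) * (m - f e)" if "e \<in> B" for e
      using nonneg le that B cB by auto
    have D_terms: "0 \<le> P $$ (c,e)" if "e \<in> ?D" for e
      using nonneg that cB by auto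
    have "0 \<le> (\<Sum>e\<in>B. P $$ (c,e) * (m - f e))" using B_terms by (rule sum_nonneg)
    moreover have "0 \<le> (\<Sum>e\<in>?D. P $$ (c,e))" using D_terms by (rule sum_nonneg)
    then have "0 \<le> (\<Sum>e\<in>?D. P $$ (c,e)) * m" using m by simp
    ultimately
    have zero_B: "(\<Sum>e\<in>B. P $$ (c,e) * (m - f e)) = 0"
      and "(\<Sum>e\<in>?D. P $$ (c,e)) * m = 0"
      using sum_0 by linarith+
    then have zero_D: "(\<Sum>e\<in>?D. P $$ (c,e)) = 0" using m by simp
    show "d \<in> C"
    proof (cases "d \<in> B")
      case True
      then have "P $$ (c,d) * (m - f d) = 0"
        using zero_B B_terms fin by (simp add: sum_nonneg_eq_0_iff)
      then show ?thesis using pos True unfolding C_def by simp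
    next
      case False
      then have "P $$ (c,d) = 0"
        using sum_nonneg_eq_0_iff[of ?D "\<lambda>e. P $$ (c,e)"] zero_D D_terms d by blast
      then show ?thesis using pos by simp
    qed
  qed
  have "a < n" using a B unfolding C_def by auto
  then obtain k where "0 < (P ^\<^sub>m k) $$ (a,i)"
    using irreducible carrier i(1) unfolding irreducible_mat_def by auto
  then have "i \<in> C"
    using reachable_mem_closed[of C] closed a i(1) B unfolding C_def by blast
  then show False using i(2) unfolding C_def by simp
qed

lemma harmonic_eq_0:
  assumes B: "B \<subseteq> {..<n}" and i: "i < n" "i \<notin> B"
    and harmonic: "\<And>b. b \<in> B \<Longrightarrow> f b = (\<Sum>c\<in>B. P $$ (b,c) * f c)"
    and b: "b \<in> B"
  shows "f b = 0"
proof -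
  have "- f c = (\<Sum>d\<in>B. P $$ (c,d) * - f d)" if "c \<in> B" for c
    using harmonic[OF that] by (simp add: sum_negf)
  then have "- f b \<le> 0" by (rule harmonic_le_0[OF B i _ b])
  with harmonic_le_0[OF B i harmonic b] show ?thesis by simp
qed

lemma block_minus_id_invertible:
  assumes B: "B \<subseteq> {..<n}" and i: "i < n" "i \<notin> B"
  shows "mat_inverse (submatrix P B B - 1 \<cdot>\<^sub>m 1\<^sub>m (card B)) \<noteq> None"
proof (rule block_shift_invertible[OF carrier B])
  fix f b
  assume harmonic: "\<And>b. b \<in> B \<Longrightarrow> 1 * f b = (\<Sum>c\<in>B. P $$ (b,c) * f c)" and b: "b \<in> B"
  have "f c = (\<Sum>d\<in>B. P $$ (c,d) * f d)" if "c \<in> B" for c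
    using harmonic[OF that] by simp
  then show "f b = 0" by (rule harmonic_eq_0[OF B i _ b])
qed

lemma iso_entry_pair_first_step:
  assumes i: "i < n" and j: "j < n" and z: "z \<in> {i,j}" and B_def: "B = {0..<n} - {i,j}"
    and F: "\<And>b. b \<in> B \<Longrightarrow> F b = P $$ (b,z) + (\<Sum>c\<in>B. P $$ (b,c) * F c)"
  shows "iso_entry {i,j} P i z = P $$ (i,z) + (\<Sum>b\<in>B. P $$ (i,b) * F b)"
proof -
  have S: "{i,j} \<subseteq> {..<n}" using i j by auto
  have spec_rad: "spec_rad P = 1"
    using spec_rad_row_stochastic[OF stochastic] carrier i by simp
  have "mat_inverse (submatrix P B B - 1 \<cdot>\<^sub>m 1\<^sub>m (card B)) \<noteq> None"
    by (rule block_minus_id_invertible[OF _ i]) (auto simp: B_def)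
  then have inv: "mat_inverse (submatrix P B B - spec_rad P \<cdot>\<^sub>m 1\<^sub>m (card B)) \<noteq> None"
    by (simp add: spec_rad)
  show ?thesis unfolding B_def
  proof (rule iso_entry_first_step[OF carrier S _ z inv[unfolded B_def]])
    fix b assume "b \<in> {0..<n} - {i,j}"
    then show "spec_rad P * F b = P $$ (b,z) + (\<Sum>c\<in>{0..<n} - {i,j}. P $$ (b,c) * F c)"
      using F[of b] spec_rad unfolding B_def by simp
  qed simp
qed

lemma iso_entries_pair:
  assumes i: "i < n" and j: "j < n" and ij: "i \<noteq> j"
  shows "iso_entry {i,j} P i j = visit_before_return P i j"
    and "iso_entry {i,j} P i i = 1 - visit_before_return P i j"
proof -
  define B where "B = {0..<n} - {i,j}"
  define h where "h b = exit_prob P B b j" for b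
  have B: "B \<subseteq> {..<n}" "j \<notin> B" and D: "{..<n} - B = {i,j}"
    using i j unfolding B_def by auto
  have h: "h b = P $$ (b,j) + (\<Sum>c\<in>B. P $$ (b,c) * h c)" if "b < n" for b
    unfolding h_def using exit_prob_first_step[OF B(1) that j B(2)] .
  have g: "1 - h b = P $$ (b,i) + (\<Sum>c\<in>B. P $$ (b,c) * (1 - h c))" if "b < n" for b
    using h[OF that] row_sum_subset[OF B(1) that] ij
    by (simp add: D right_diff_distrib sum_subtractf)
  have vbr: "visit_before_return P i j = h i"
    using carrier by (simp add: visit_before_return_eq_exit_prob h_def B_def)
  have "iso_entry {i,j} P i j = P $$ (i,j) + (\<Sum>b\<in>B. P $$ (i,b) * h b)"
    by (rule iso_entry_pair_first_step[OF i j _ B_def]) (use B(1) in \<open>auto intro: h\<close>)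
  then show "iso_entry {i,j} P i j = visit_before_return P i j"
    using h[OF i] vbr by simp
  have "iso_entry {i,j} P i i = P $$ (i,i) + (\<Sum>b\<in>B. P $$ (i,b) * (1 - h b))"
    by (rule iso_entry_pair_first_step[OF i j _ B_def]) (use B(1) in \<open>auto intro: g\<close>)
  then show "iso_entry {i,j} P i i = 1 - visit_before_return P i j"
    using g[OF i] vbr by simp
qed

end

theorem theorem1:
  fixes P :: "real mat" and n :: nat and eps :: "nat \<Rightarrow> nat \<Rightarrow> real"
  assumes "P \<in> carrier_mat n n"
    and "n \<ge> 2"
    and "row_stochastic P"
    and "irreducible_mat P"
    and "\<And>i j. i < n \<Longrightarrow> j < n \<Longrightarrow> i \<noteq> j \<Longrightarrow> eps i j = visit_before_return P i j"
    and "\<And>i. i < n \<Longrightarrow> eps i i = (\<Sum>k\<in>{0..<n} - {i}. 1 - eps i k)"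
  shows "(\<forall>i<n. \<forall>j<n. i \<noteq> j \<longrightarrow> eps i j = iso_entry {i,j} P i j)
       \<and> (\<forall>i<n. eps i i = (\<Sum>k\<in>{0..<n} - {i}. iso_entry {i,k} P i i))"
proof -
  interpret irreducible_stochastic_matrix P n
    using assms(1,3,4) by unfold_locales
  show ?thesis
  proof (intro conjI allI impI)
    fix i j assume "i < n" "j < n" "i \<noteq> j"
    then show "eps i j = iso_entry {i,j} P i j" using assms(5) iso_entries_pair(1) by simp
  next
    fix i assume i: "i < n"
    have "eps i i = (\<Sum>k\<in>{0..<n} - {i}. 1 - eps i k)" by (rule assms(6)[OF i])
    also have "\<dots> = (\<Sum>k\<in>{0..<n} - {i}. iso_entry {i,k} P i i)"
      using i assms(5) iso_entries_pair(2) by (intro sum.cong) auto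
    finally show "eps i i = (\<Sum>k\<in>{0..<n} - {i}. iso_entry {i,k} P i i)" .
  qed
qed

end
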